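(* Let $\alpha>0$, $t_0>0$, $x_0\in\mathcal H$, and let $x$ be a solution of the Cauchy problem $$\tfrac{\alpha}{t}\dot x(t)+\operatorname{proj}_{C(x(t))+\ddot x(t)}(0)=0\ (t>t_0),\qquad x(t_0)=x_0,\ \dot x(t_0)=0 .$$ Let $\mathcal W_i(t)=f_i(x(t))+\frac12\|\dot x(t)\|^2$, and for $z\in\mathcal H$ let $h_z(t)=\frac12\|x(t)-z\|^2$ and $C_z=(\alpha+1)\frac{1}{t_0^2}h_z(t_0)+\frac{3}{2\alpha}\max_{i}\big(f_i(x_0)-f_i(z)\big)$. Then there exist constants $A,B\in\mathbb R$, independent of $z$, such that for all $z\in\mathcal H$ and all $\tau>t_0$, $$\min_{i=1,\dots,m}\big(\mathcal W_i(\tau)-f_i(z)\big)\,\big[\tau\ln\tau+A\tau+B\big]\le C_z(\tau-t_0)+\frac{h_z(t_0)}{t_0}.$$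
   Context: $\mathcal H$ is a real Hilbert space. $f_1,\dots,f_m:\mathcal H\to\mathbb R$ are convex and continuously differentiable. $C(x)=\operatorname{co}\{\nabla f_i(x):i=1,\dots,m\}$. For a closed convex $K$, $\operatorname{proj}_K(y)=\arg\min_{w\in K}\|w-y\|^2$. A solution of the Cauchy problem is a function $x:[t_0,+\infty)\to\mathcal H$ such that: $x\in C^1([t_0,+\infty))$; $\dot x$ is absolutely continuous on $[t_0,T]$ for every $T\ge t_0$; there is a Bochner measurable $\ddot x$ with $\dot x(t)=\dot x(t_0)+\int_{t_0}^t\ddot x(s)\,ds$ for all $t$, and $\frac{d}{dt}\dot x=\ddot x$ a.e.; the equation holds for almost all $t\ge t_0$; and the initial conditions hold. *)

theory Defs
  imports "HOL-Analysis.Analysis"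
begin

definition proj :: "'a::real_inner set \<Rightarrow> 'a \<Rightarrow> 'a" where
  "proj K y = (SOME w. w \<in> K \<and> (\<forall>v\<in>K. (norm (w - y)) ^ 2 \<le> (norm (v - y)) ^ 2))"

definition abs_continuous_on :: "real \<Rightarrow> real \<Rightarrow> (real \<Rightarrow> 'a::real_normed_vector) \<Rightarrow> bool" where
  "abs_continuous_on a b u \<longleftrightarrow>
     (\<forall>\<epsilon>>0. \<exists>\<delta>>0. \<forall>I :: (real \<times> real) set.
        finite I \<and> (\<forall>(p,q)\<in>I. a \<le> p \<and> p \<le> q \<and> q \<le> b)
        \<and> (\<forall>i\<in>I. \<forall>j\<in>I. i \<noteq> j \<longrightarrow> {fst i<..<snd i} \<inter> {fst j<..<snd j} = {})
        \<and> (\<Sum>(p,q)\<in>I. q - p) < \<delta>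
        \<longrightarrow> (\<Sum>(p,q)\<in>I. norm (u q - u p)) < \<epsilon>)"

end

theory Submission
  imports Defs
begin

text \<open>Almost everywhere, the equation says \<open>x'' = -(\<alpha>/t) x' - c\<close> with \<open>c \<in> C(x)\<close>, and the
  variational inequality of the projection gives \<open>\<langle>x', w + x''\<rangle> \<le> -(\<alpha>/t) \<parallel>x'\<parallel>\<^sup>2\<close> for all
  \<open>w \<in> C(x)\<close>; hence every energy \<open>W\<^sub>i = f\<^sub>i \<circ> x + \<parallel>x'\<parallel>\<^sup>2/2\<close> is nonincreasing.
  With \<open>\<mu> = min\<^sub>i (W\<^sub>i(\<tau>) - f\<^sub>i(z))\<close>, convexity gives \<open>\<langle>x - z, c\<rangle> \<ge> \<mu> - \<parallel>x'\<parallel>\<^sup>2/2\<close> on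
  \<open>[t\<^sub>0, \<tau>]\<close>, which makes \<open>\<langle>x - z, x'\<rangle>/t + (\<alpha> + 1) h\<^sub>z/t\<^sup>2 + \<mu> ln t + 3/(2\<alpha>) W\<^sub>0\<close> nonincreasing.
  This bounds \<open>h\<^sub>z'/t\<close>, and integrating once more yields the estimate.
  Since \<open>x'\<close> is only differentiable almost everywhere, monotonicity is derived from almost
  everywhere derivatives of pointwise Lipschitz functions, which cannot increase on null sets.\<close>

section \<open>Pointwise Lipschitz functions\<close>

definition lipschitz_at :: "'a::metric_space set \<Rightarrow> ('a \<Rightarrow> 'b::metric_space) \<Rightarrow> 'a \<Rightarrow> bool" where
  "lipschitz_at S f x \<longleftrightarrow> (\<exists>d>0. \<exists>B. \<forall>y\<in>S. dist y x < d \<longrightarrow> dist (f y) (f x) \<le> B * dist y x)"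

lemma lipschitz_atI:
  assumes "d > 0" "\<And>y. y \<in> S \<Longrightarrow> dist y x < d \<Longrightarrow> dist (f y) (f x) \<le> B * dist y x"
  shows "lipschitz_at S f x"
  using assms unfolding lipschitz_at_def by blast

lemma lipschitz_atE:
  assumes "lipschitz_at S f x"
  obtains d B where "d > 0" "B \<ge> 0" "\<And>y. y \<in> S \<Longrightarrow> dist y x < d \<Longrightarrow> dist (f y) (f x) \<le> B * dist y x"
proof -
  obtain d B where "d > 0" and B: "\<forall>y\<in>S. dist y x < d \<longrightarrow> dist (f y) (f x) \<le> B * dist y x"
    using assms unfolding lipschitz_at_def by blast
  moreover have "B * dist y x \<le> \<bar>B\<bar> * dist y x" for y
    by (simp add: mult_right_mono)
  ultimately show thesis
    using that[of d "\<bar>B\<bar>"] by (meson abs_ge_zero order_trans)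
qed

lemma lipschitz_at_const: "lipschitz_at S (\<lambda>y. c) x"
  by (rule lipschitz_atI[where d=1 and B=0]) auto

lemma lipschitz_at_subset: "lipschitz_at S f x \<Longrightarrow> T \<subseteq> S \<Longrightarrow> lipschitz_at T f x"
  unfolding lipschitz_at_def by blast

lemma lipschitz_on_imp_lipschitz_at: "L-lipschitz_on S f \<Longrightarrow> x \<in> S \<Longrightarrow> lipschitz_at S f x"
  by (rule lipschitz_atI[where d=1 and B=L]) (auto dest: lipschitz_onD)

lemma lipschitz_at_add:
  fixes f g :: "'a::metric_space \<Rightarrow> 'b::real_normed_vector"
  assumes "lipschitz_at S f x" "lipschitz_at S g x"
  shows "lipschitz_at S (\<lambda>y. f y + g y) x"
proof -
  obtain d1 B1 where "d1 > 0" "B1 \<ge> 0"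
    and f: "\<And>y. y \<in> S \<Longrightarrow> dist y x < d1 \<Longrightarrow> dist (f y) (f x) \<le> B1 * dist y x"
    using assms(1) by (metis lipschitz_atE)
  obtain d2 B2 where "d2 > 0" "B2 \<ge> 0"
    and g: "\<And>y. y \<in> S \<Longrightarrow> dist y x < d2 \<Longrightarrow> dist (g y) (g x) \<le> B2 * dist y x"
    using assms(2) by (metis lipschitz_atE)
  show ?thesis
  proof (rule lipschitz_atI[of "min d1 d2"])
    fix y assume "y \<in> S" "dist y x < min d1 d2"
    then have "dist (f y + g y) (f x + g x) \<le> B1 * dist y x + B2 * dist y x"
      using dist_triangle_add[of "f y" "g y" "f x" "g x"] f g by fastforce
    then show "dist (f y + g y) (f x + g x) \<le> (B1 + B2) * dist y x"
      by (simp add: algebra_simps)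
  qed (use \<open>d1 > 0\<close> \<open>d2 > 0\<close> in simp)
qed

lemma lipschitz_at_diff:
  fixes f g :: "'a::metric_space \<Rightarrow> 'b::real_normed_vector"
  assumes "lipschitz_at S f x" "lipschitz_at S g x"
  shows "lipschitz_at S (\<lambda>y. f y - g y) x"
proof -
  have "lipschitz_at S (\<lambda>y. - g y) x"
    using assms(2) unfolding lipschitz_at_def by (simp add: dist_minus)
  then show ?thesis
    using lipschitz_at_add[OF assms(1)] by (simp only: diff_conv_add_uminus)
qed

lemma lipschitz_at_inner:
  fixes f g :: "'a::metric_space \<Rightarrow> 'b::real_inner"
  assumes "lipschitz_at S f x" "lipschitz_at S g x"
  shows "lipschitz_at S (\<lambda>y. f y \<bullet> g y) x"
proof -
  obtain d1 B1 where "d1 > 0" "B1 \<ge> 0"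
    and f: "\<And>y. y \<in> S \<Longrightarrow> dist y x < d1 \<Longrightarrow> norm (f y - f x) \<le> B1 * dist y x"
    using assms(1) by (metis lipschitz_atE dist_norm)
  obtain d2 B2 where "d2 > 0" "B2 \<ge> 0"
    and g: "\<And>y. y \<in> S \<Longrightarrow> dist y x < d2 \<Longrightarrow> norm (g y - g x) \<le> B2 * dist y x"
    using assms(2) by (metis lipschitz_atE dist_norm)
  show ?thesis
  proof (rule lipschitz_atI[of "min 1 (min d1 d2)"])
    fix y assume y: "y \<in> S" "dist y x < min 1 (min d1 d2)"
    have "norm (f y) \<le> norm (f x) + B1"
      using norm_triangle_sub[of "f y" "f x"] f[OF y(1)] y(2) \<open>B1 \<ge> 0\<close>
      by (smt (verit, best) min_less_iff_conj mult_left_le)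
    moreover have "f y \<bullet> g y - f x \<bullet> g x = f y \<bullet> (g y - g x) + (f y - f x) \<bullet> g x"
      by (simp add: inner_diff_left inner_diff_right)
    ultimately have "\<bar>f y \<bullet> g y - f x \<bullet> g x\<bar> \<le> (norm (f x) + B1) * (B2 * dist y x) + (B1 * dist y x) * norm (g x)"
      using f[OF y(1)] g[OF y(1)] y(2)
      by (smt (verit, best) Cauchy_Schwarz_ineq2 min_less_iff_conj mult_mono norm_ge_zero
          zero_le_dist mult_nonneg_nonneg \<open>B2 \<ge> 0\<close>)
    then show "dist (f y \<bullet> g y) (f x \<bullet> g x) \<le> ((norm (f x) + B1) * B2 + B1 * norm (g x)) * dist y x"
      by (simp add: dist_real_def algebra_simps)
  qed (use \<open>d1 > 0\<close> \<open>d2 > 0\<close> in simp)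
qed

lemma lipschitz_at_mult:
  fixes f g :: "'a::metric_space \<Rightarrow> real"
  shows "lipschitz_at S f x \<Longrightarrow> lipschitz_at S g x \<Longrightarrow> lipschitz_at S (\<lambda>y. f y * g y) x"
  using lipschitz_at_inner[of S f x g] by simp

lemma has_derivative_imp_lipschitz_at:
  fixes f :: "'a::real_normed_vector \<Rightarrow> 'b::real_normed_vector"
  assumes "(f has_derivative f') (at x within S)"
  shows "lipschitz_at S f x"
proof -
  interpret bounded_linear f'
    using assms by (rule has_derivative_bounded_linear)
  obtain K where K: "\<And>h. norm (f' h) \<le> norm h * K"
    using bounded by blast
  obtain d where "d > 0"
    and d: "\<And>y. y \<in> S \<Longrightarrow> norm (y - x) < d \<Longrightarrow> norm (f y - f x - f' (y - x)) \<le> norm (y - x)"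
    using assms unfolding has_derivative_within_alt by (metis mult_1 zero_less_one)
  show ?thesis
  proof (rule lipschitz_atI[OF \<open>d > 0\<close>])
    fix y assume "y \<in> S" "dist y x < d"
    then have "norm (f y - f x) \<le> norm (y - x) + norm (y - x) * K"
      using d[of y] K[of "y - x"] norm_triangle_ineq[of "f y - f x - f' (y - x)" "f' (y - x)"]
      by (simp add: dist_norm)
    then show "dist (f y) (f x) \<le> (1 + K) * dist y x"
      by (simp add: dist_norm algebra_simps)
  qed
qed

lemma DERIV_imp_lipschitz_at:
  "(f has_real_derivative D) (at x within S) \<Longrightarrow> lipschitz_at S f x"
  unfolding has_field_derivative_def by (rule has_derivative_imp_lipschitz_at)

lemma vector_derivative_imp_lipschitz_at:
  "(f has_vector_derivative v) (at x within S) \<Longrightarrow> lipschitz_at S f x"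
  unfolding has_vector_derivative_def by (rule has_derivative_imp_lipschitz_at)

lemma lipschitz_at_imp_continuous_within:
  assumes "lipschitz_at S f x"
  shows "continuous (at x within S) f"
proof -
  obtain d B where "d > 0" "B \<ge> 0" and B: "\<And>y. y \<in> S \<Longrightarrow> dist y x < d \<Longrightarrow> dist (f y) (f x) \<le> B * dist y x"
    using assms by (metis lipschitz_atE)
  show ?thesis
    unfolding continuous_within_eps_delta
  proof (intro allI impI)
    fix e :: real assume "e > 0"
    show "\<exists>d'>0. \<forall>y\<in>S. dist y x < d' \<longrightarrow> dist (f y) (f x) < e"
    proof (intro exI[of _ "min d (e / (B + 1))"] conjI ballI impI)
      fix y assume y: "y \<in> S" "dist y x < min d (e / (B + 1))"
      then have "(B + 1) * dist y x < e"
        using \<open>B \<ge> 0\<close> by (simp add: field_simps)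
      then show "dist (f y) (f x) < e"
        using B[OF y(1)] y(2) by (smt (verit) mult_right_mono zero_le_dist min_less_iff_conj)
    qed (use \<open>d > 0\<close> \<open>e > 0\<close> \<open>B \<ge> 0\<close> in simp)
  qed
qed

section \<open>Monotonicity from almost everywhere derivatives\<close>

lemma negligible_lipschitz_at_image:
  fixes f :: "'a::euclidean_space \<Rightarrow> 'b::euclidean_space"
  assumes "DIM('a) \<le> DIM('b)" "negligible S" "\<And>x. x \<in> S \<Longrightarrow> lipschitz_at S f x"
  shows "negligible (f ` S)"
  using assms(1,2)
proof (rule negligible_locally_Lipschitz_image)
  fix x assume "x \<in> S"
  then obtain d B where "d > 0" and B: "\<And>y. y \<in> S \<Longrightarrow> dist y x < d \<Longrightarrow> dist (f y) (f x) \<le> B * dist y x"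
    using assms(3) by (metis lipschitz_atE)
  then show "\<exists>T B. open T \<and> x \<in> T \<and> (\<forall>y\<in>S \<inter> T. norm (f y - f x) \<le> B * norm (y - x))"
    by (intro exI[of _ "ball x d"] exI[of _ B]) (auto simp: dist_norm norm_minus_commute)
qed

lemma IVT_last_crossing:
  fixes \<psi> :: "real \<Rightarrow> real"
  assumes "a \<le> b" and cont: "continuous_on {a..b} \<psi>" and "\<psi> a < y" "y < \<psi> b"
  obtains c where "a < c" "c < b" "\<psi> c = y" "\<And>t. c < t \<Longrightarrow> t \<le> b \<Longrightarrow> y < \<psi> t"
proof -
  define R where "R = {t \<in> {a..b}. \<psi> t = y}"
  have "closed R"
    unfolding R_def by (rule continuous_closed_preimage_constant[OF cont closed_atLeastAtMost])
  moreover have "bdd_above R"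
    unfolding R_def by (auto intro: bdd_aboveI[of _ b])
  moreover have "R \<noteq> {}"
    using IVT'[of \<psi> a y b] assms by (fastforce simp: R_def)
  ultimately have "Sup R \<in> R" and upper: "\<And>t. t \<in> R \<Longrightarrow> t \<le> Sup R"
    by (auto intro: closed_contains_Sup cSup_upper)
  then have c: "a < Sup R" "Sup R < b" "\<psi> (Sup R) = y"
    using assms(3,4) by (auto simp: R_def order.order_iff_strict)
  have "y < \<psi> t" if t: "Sup R < t" "t \<le> b" for t
  proof (rule ccontr)
    assume "\<not> y < \<psi> t"
    moreover have "continuous_on {t..b} \<psi>"
      by (rule continuous_on_subset[OF cont]) (use c t in auto)
    ultimately obtain s where "t \<le> s" "s \<le> b" "\<psi> s = y"
      using IVT'[of \<psi> t y b] assms(4) t by auto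
    then have "s \<le> Sup R"
      using c t by (intro upper) (auto simp: R_def)
    then show False
      using t \<open>t \<le> s\<close> by simp
  qed
  with c that show thesis by blast
qed

text \<open>Every value strictly between \<open>\<psi> a\<close> and \<open>\<psi> b\<close> is taken at its last crossing, where
  a negative derivative is impossible; so these values all lie in the image of the null set \<open>N\<close>,
  which is null because \<open>\<psi>\<close> is pointwise Lipschitz (Lusin's property N).\<close>

lemma lipschitz_at_DERIV_neg_ae_imp_le:
  fixes \<psi> :: "real \<Rightarrow> real"
  assumes "a \<le> b" and lip: "\<And>t. t \<in> {a..b} \<Longrightarrow> lipschitz_at {a..b} \<psi> t" and "negligible N"
    and deriv: "\<And>t. a < t \<Longrightarrow> t < b \<Longrightarrow> t \<notin> N \<Longrightarrow> \<exists>D<0. (\<psi> has_real_derivative D) (at t)"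
  shows "\<psi> b \<le> \<psi> a"
proof (rule ccontr)
  assume "\<not> \<psi> b \<le> \<psi> a"
  have cont: "continuous_on {a..b} \<psi>"
    using lip lipschitz_at_imp_continuous_within continuous_on_eq_continuous_within by blast
  have "{\<psi> a<..<\<psi> b} \<subseteq> \<psi> ` (N \<inter> {a..b})"
  proof
    fix y assume "y \<in> {\<psi> a<..<\<psi> b}"
    then obtain c where c: "a < c" "c < b" "\<psi> c = y" and above: "\<And>t. c < t \<Longrightarrow> t \<le> b \<Longrightarrow> y < \<psi> t"
      using IVT_last_crossing[OF \<open>a \<le> b\<close> cont] by auto
    have "c \<in> N"
    proof (rule ccontr)
      assume "c \<notin> N"
      then obtain D where "D < 0" "(\<psi> has_real_derivative D) (at c)"
        using deriv c by blast
      then obtain d where "d > 0" and below: "\<And>h. 0 < h \<Longrightarrow> h < d \<Longrightarrow> \<psi> (c + h) < \<psi> c"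
        using DERIV_neg_dec_right by blast
      have "\<psi> (c + min (d / 2) (b - c)) < y"
        using below[of "min (d / 2) (b - c)"] \<open>d > 0\<close> c by simp
      moreover have "y < \<psi> (c + min (d / 2) (b - c))"
        using above \<open>d > 0\<close> c by simp
      ultimately show False
        by simp
    qed
    with c show "y \<in> \<psi> ` (N \<inter> {a..b})"
      by force
  qed
  moreover have "negligible (\<psi> ` (N \<inter> {a..b}))"
    using \<open>negligible N\<close> lip
    by (intro negligible_lipschitz_at_image) (auto intro: lipschitz_at_subset negligible_subset[of N])
  ultimately have "negligible {\<psi> a<..<\<psi> b}"
    by (rule negligible_subset[rotated])
  then show False
    using \<open>\<not> \<psi> b \<le> \<psi> a\<close> negligible_interval(2)[of "\<psi> a" "\<psi> b"] by (simp add: box_real)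
qed

lemma lipschitz_at_DERIV_nonpos_ae_imp_decreasing:
  fixes \<phi> :: "real \<Rightarrow> real"
  assumes "a \<le> b" and lip: "\<And>t. t \<in> {a..b} \<Longrightarrow> lipschitz_at {a..b} \<phi> t" and "negligible N"
    and deriv: "\<And>t. a < t \<Longrightarrow> t < b \<Longrightarrow> t \<notin> N \<Longrightarrow> \<exists>D\<le>0. (\<phi> has_real_derivative D) (at t)"
  shows "\<phi> b \<le> \<phi> a"
proof (rule field_le_epsilon)
  fix e :: real assume "e > 0"
  define \<delta> where "\<delta> = e / (b - a + 1)"
  have "\<delta> > 0"
    using \<open>e > 0\<close> \<open>a \<le> b\<close> by (simp add: \<delta>_def)
  have "(\<lambda>t. \<phi> t - \<delta> * (t - a)) b \<le> (\<lambda>t. \<phi> t - \<delta> * (t - a)) a"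
  proof (rule lipschitz_at_DERIV_neg_ae_imp_le[OF \<open>a \<le> b\<close> _ \<open>negligible N\<close>])
    fix t assume "t \<in> {a..b}"
    have "((\<lambda>t. \<delta> * (t - a)) has_real_derivative \<delta>) (at t within {a..b})"
      by (auto intro!: derivative_eq_intros)
    then show "lipschitz_at {a..b} (\<lambda>t. \<phi> t - \<delta> * (t - a)) t"
      by (rule lipschitz_at_diff[OF lip[OF \<open>t \<in> {a..b}\<close>] DERIV_imp_lipschitz_at])
  next
    fix t assume "a < t" "t < b" "t \<notin> N"
    then obtain D where "D \<le> 0" "(\<phi> has_real_derivative D) (at t)"
      using deriv by blast
    then show "\<exists>D<0. ((\<lambda>t. \<phi> t - \<delta> * (t - a)) has_real_derivative D) (at t)"
      using \<open>\<delta> > 0\<close> by (intro exI[of _ "D - \<delta>"]) (auto intro!: derivative_eq_intros)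
  qed
  moreover have "\<delta> * (b - a) \<le> e"
    using \<open>e > 0\<close> \<open>a \<le> b\<close> by (simp add: \<delta>_def field_simps)
  ultimately show "\<phi> b \<le> \<phi> a + e"
    by simp
qed

section \<open>Convexity, projections and calculus\<close>

lemma convex_on_imp_above_tangent_inner:
  fixes f :: "'a::real_inner \<Rightarrow> real"
  assumes convex: "convex_on UNIV f" and deriv: "(f has_derivative (\<lambda>h. g \<bullet> h)) (at x)"
  shows "f x + g \<bullet> (z - x) \<le> f z"
proof -
  define \<phi> where "\<phi> s = f (x + s *\<^sub>R (z - x))" for s :: real
  have "convex_on UNIV \<phi>"
  proof (rule convex_onI)
    fix t a b :: real assume "0 < t" "t < 1"
    have "x + ((1 - t) *\<^sub>R a + t *\<^sub>R b) *\<^sub>R (z - x)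
        = (1 - t) *\<^sub>R (x + a *\<^sub>R (z - x)) + t *\<^sub>R (x + b *\<^sub>R (z - x))"
      by (simp add: algebra_simps)
    then show "\<phi> ((1 - t) *\<^sub>R a + t *\<^sub>R b) \<le> (1 - t) * \<phi> a + t * \<phi> b"
      unfolding \<phi>_def using \<open>0 < t\<close> \<open>t < 1\<close> by (simp add: convex_onD[OF convex])
  qed simp
  moreover have "(\<phi> has_real_derivative g \<bullet> (z - x)) (at 0)"
  proof -
    have "(f has_derivative (\<lambda>h. g \<bullet> h)) (at (x + 0 *\<^sub>R (z - x)))"
      using deriv by simp
    then have "(\<phi> has_derivative (\<lambda>s. g \<bullet> (s *\<^sub>R (z - x)))) (at 0)"
      unfolding \<phi>_def[abs_def] by (rule has_derivative_compose[rotated]) (auto intro!: derivative_eq_intros)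
    moreover have "(\<lambda>s. g \<bullet> (s *\<^sub>R (z - x))) = (*) (g \<bullet> (z - x))"
      by (auto simp: fun_eq_iff)
    ultimately show ?thesis
      by (simp add: has_field_derivative_def)
  qed
  ultimately have "g \<bullet> (z - x) * (1 - 0) \<le> \<phi> 1 - \<phi> 0"
    by (intro convex_on_imp_above_tangent[where A = UNIV]) auto
  then show ?thesis
    by (simp add: \<phi>_def)
qed

lemma proj_closest:
  fixes K :: "'a::real_inner set"
  assumes "compact K" "K \<noteq> {}"
  shows "proj K y \<in> K" "\<And>v. v \<in> K \<Longrightarrow> dist y (proj K y) \<le> dist y v"
proof -
  have "continuous_on K (\<lambda>v. dist y v)"
    by (intro continuous_intros)
  then obtain w where "w \<in> K" "\<forall>v\<in>K. dist y w \<le> dist y v"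
    using continuous_attains_inf[OF assms] by blast
  then have "\<exists>w. w \<in> K \<and> (\<forall>v\<in>K. (norm (w - y))\<^sup>2 \<le> (norm (v - y))\<^sup>2)"
    by (metis dist_commute dist_norm norm_ge_zero power_mono)
  then have "proj K y \<in> K \<and> (\<forall>v\<in>K. (norm (proj K y - y))\<^sup>2 \<le> (norm (v - y))\<^sup>2)"
    unfolding proj_def by (rule someI_ex)
  then show "proj K y \<in> K" "\<And>v. v \<in> K \<Longrightarrow> dist y (proj K y) \<le> dist y v"
    by (auto simp: dist_norm norm_minus_commute power_mono_iff)
qed

lemma proj_variational_inequality:
  fixes K :: "'a::real_inner set"
  assumes "compact K" "convex K" "v \<in> K"
  shows "(y - proj K y) \<bullet> (v - proj K y) \<le> 0"
  using proj_closest[OF assms(1)] assms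
  by (intro any_closest_point_dot[where S = K]) (auto intro: compact_imp_closed)

lemma proj_translated_hull_eqD:
  fixes G :: "'a::real_inner set"
  assumes "finite G" "G \<noteq> {}" "\<beta> > 0"
    and eq: "\<beta> *\<^sub>R v + proj ((\<lambda>c. c + y) ` (convex hull G)) 0 = 0"
  shows "\<exists>c\<in>convex hull G. y = - \<beta> *\<^sub>R v - c"
    and "\<And>w. w \<in> convex hull G \<Longrightarrow> v \<bullet> (w + y) \<le> - \<beta> * (norm v)\<^sup>2"
proof -
  let ?K = "(\<lambda>c. c + y) ` (convex hull G)"
  have K: "compact ?K" "convex ?K" "?K \<noteq> {}"
    using assms(1,2) by (auto intro!: compact_continuous_image continuous_intros convex_translation
        finite_imp_compact_convex_hull simp: add.commute[of _ y])
  have p: "proj ?K 0 = - \<beta> *\<^sub>R v"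
    using eq by (simp add: eq_neg_iff_add_eq_0 add.commute)
  then show "\<exists>c\<in>convex hull G. y = - \<beta> *\<^sub>R v - c"
    using proj_closest(1)[OF K(1,3), of 0] by (force simp: algebra_simps)
  fix w assume "w \<in> convex hull G"
  then have "(0 - proj ?K 0) \<bullet> ((w + y) - proj ?K 0) \<le> 0"
    by (intro proj_variational_inequality K) auto
  then have "\<beta> * (v \<bullet> (w + y) + \<beta> * (norm v)\<^sup>2) \<le> 0"
    unfolding p by (simp add: inner_add_right power2_norm_eq_inner algebra_simps)
  then show "v \<bullet> (w + y) \<le> - \<beta> * (norm v)\<^sup>2"
    using \<open>\<beta> > 0\<close> by (simp add: mult_le_0_iff)
qed

text \<open>An inner product space need not be of class \<open>banach\<close>, so the integrals are compared
  after pairing with the fixed vector \<open>F t - F s\<close>.\<close>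

lemma lipschitz_on_primitive:
  fixes F f :: "real \<Rightarrow> 'a::real_inner"
  assumes prim: "\<And>t. t \<in> {a..b} \<Longrightarrow> (f has_integral F t - F a) {a..t}"
    and "negligible N" and bound: "\<And>t. t \<in> {a..b} - N \<Longrightarrow> norm (f t) \<le> L" and "0 \<le> L"
  shows "L-lipschitz_on {a..b} F"
proof (rule lipschitz_on_leI[OF _ \<open>0 \<le> L\<close>])
  fix s t assume st: "s \<in> {a..b}" "t \<in> {a..b}" "s \<le> t"
  define w where "w = F t - F s"
  define \<phi> where "\<phi> r = (if r \<in> N then 0 else f r \<bullet> w)" for r
  have \<phi>: "(\<phi> has_integral (F u - F a) \<bullet> w) {a..u}" if "u \<in> {a..b}" for u
  proof (rule has_integral_spike[OF \<open>negligible N\<close>])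
    show "((\<lambda>r. f r \<bullet> w) has_integral (F u - F a) \<bullet> w) {a..u}"
      using has_integral_linear[OF prim[OF that] bounded_linear_inner_left[of w]] by (simp add: o_def)
  qed (simp add: \<phi>_def)
  have "\<phi> integrable_on {a..t}"
    using \<phi>[OF st(2)] by (rule has_integral_integrable)
  then have "integral {s..t} \<phi> = (F t - F a) \<bullet> w - (F s - F a) \<bullet> w"
    using Henstock_Kurzweil_Integration.integral_combine[of a s t \<phi>] \<phi>[OF st(1)] \<phi>[OF st(2)] st
    by (simp add: integral_unique)
  also have "\<dots> = (norm w)\<^sup>2"
    by (simp add: w_def power2_norm_eq_inner inner_diff_left)
  finally have "(\<phi> has_integral (norm w)\<^sup>2) {s..t}"
    using integrable_integral[OF integrable_subinterval_real[OF \<open>\<phi> integrable_on {a..t}\<close>, of s t]] st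
    by simp
  moreover have "norm (\<phi> r) \<le> L * norm w" if "r \<in> {s..t}" for r
  proof (cases "r \<in> N")
    case False
    then have "norm (f r) \<le> L"
      using bound[of r] that st by auto
    then show ?thesis
      using Cauchy_Schwarz_ineq2[of "f r" w] False
      by (simp add: \<phi>_def) (meson mult_right_mono norm_ge_zero order_trans)
  qed (simp add: \<phi>_def \<open>0 \<le> L\<close>)
  ultimately have "norm ((norm w)\<^sup>2) \<le> L * norm w * Henstock_Kurzweil_Integration.content {s..t}"
    using \<open>0 \<le> L\<close> by (intro has_integral_bound_real[OF _ finite.emptyI]) auto
  then have "norm w * norm w \<le> norm w * (L * (t - s))"
    using st by (simp add: power2_eq_square algebra_simps)
  then have "norm w \<le> L * (t - s)"
    by (cases "norm w = 0") (use \<open>0 \<le> L\<close> st in auto)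
  then show "dist (F s) (F t) \<le> L * dist s t"
    using st by (simp add: w_def dist_norm dist_real_def norm_minus_commute)
qed

lemma has_vector_derivative_inner:
  fixes u w :: "real \<Rightarrow> 'a::real_inner"
  assumes "(u has_vector_derivative u') (at t within S)" "(w has_vector_derivative w') (at t within S)"
  shows "((\<lambda>s. u s \<bullet> w s) has_real_derivative u t \<bullet> w' + u' \<bullet> w t) (at t within S)"
proof -
  have "((\<lambda>s. u s \<bullet> w s) has_derivative (\<lambda>h. u t \<bullet> (h *\<^sub>R w') + (h *\<^sub>R u') \<bullet> w t)) (at t within S)"
    using assms unfolding has_vector_derivative_def by (rule has_derivative_inner)
  moreover have "(\<lambda>h. u t \<bullet> (h *\<^sub>R w') + (h *\<^sub>R u') \<bullet> w t) = (*) (u t \<bullet> w' + u' \<bullet> w t)"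
    by (auto simp: algebra_simps)
  ultimately show ?thesis
    by (simp add: has_field_derivative_def)
qed

lemma has_vector_derivative_compose_gradient:
  fixes f :: "'a::real_inner \<Rightarrow> real"
  assumes "(x has_vector_derivative v) (at t within S)" "(f has_derivative (\<lambda>h. g \<bullet> h)) (at (x t))"
  shows "((\<lambda>s. f (x s)) has_real_derivative g \<bullet> v) (at t within S)"
proof -
  have "((\<lambda>s. f (x s)) has_derivative (\<lambda>h. g \<bullet> (h *\<^sub>R v))) (at t within S)"
    using has_derivative_compose[OF assms(1)[unfolded has_vector_derivative_def] assms(2)] by simp
  moreover have "(\<lambda>h. g \<bullet> (h *\<^sub>R v)) = (*) (g \<bullet> v)"
    by (auto simp: fun_eq_iff)
  ultimately show ?thesis
    by (simp add: has_field_derivative_def)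
qed

section \<open>The inertial multiobjective dynamics\<close>

locale inertial_multiobjective_system =
  fixes m :: nat
    and f :: "nat \<Rightarrow> 'a::{real_inner,complete_space} \<Rightarrow> real"
    and g :: "nat \<Rightarrow> 'a \<Rightarrow> 'a"
    and \<alpha> t\<^sub>0 :: real
    and x x' x'' :: "real \<Rightarrow> 'a"
  assumes m_pos: "m > 0"
    and f_convex: "\<And>i. i < m \<Longrightarrow> convex_on UNIV (f i)"
    and f_grad: "\<And>i y. i < m \<Longrightarrow> (f i has_derivative (\<lambda>h. g i y \<bullet> h)) (at y)"
    and g_cont: "\<And>i. i < m \<Longrightarrow> continuous_on UNIV (g i)"
    and \<alpha>_pos: "\<alpha> > 0"
    and t0_pos: "t\<^sub>0 > 0"
    and x_deriv: "\<And>t. t \<ge> t\<^sub>0 \<Longrightarrow> (x has_vector_derivative x' t) (at t within {t\<^sub>0..})"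
    and x'_cont: "continuous_on {t\<^sub>0..} x'"
    and x''_int: "\<And>t. t \<ge> t\<^sub>0 \<Longrightarrow> x'' integrable_on {t\<^sub>0..t}"
    and x'_eq: "\<And>t. t \<ge> t\<^sub>0 \<Longrightarrow> x' t = x' t\<^sub>0 + integral {t\<^sub>0..t} x''"
    and x''_deriv: "AE t in lborel. t \<ge> t\<^sub>0 \<longrightarrow> (x' has_vector_derivative x'' t) (at t)"
    and equation: "AE t in lborel. t > t\<^sub>0 \<longrightarrow>
        (\<alpha> / t) *\<^sub>R x' t + proj ((\<lambda>c. c + x'' t) ` (convex hull {g i (x t) | i. i < m})) 0 = 0"
begin

definition C :: "'a \<Rightarrow> 'a set" where
  "C y = convex hull {g i y | i. i < m}"

definition regular :: "real \<Rightarrow> bool" where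
  "regular t \<longleftrightarrow> t\<^sub>0 < t \<and> (x' has_vector_derivative x'' t) (at t)
     \<and> (\<alpha> / t) *\<^sub>R x' t + proj ((\<lambda>c. c + x'' t) ` C (x t)) 0 = 0"

lemma negligible_irregular: "negligible {t. t\<^sub>0 < t \<and> \<not> regular t}"
proof -
  have "AE t in lborel. t\<^sub>0 < t \<longrightarrow> regular t"
    using x''_deriv equation by eventually_elim (auto simp: regular_def C_def)
  then have "AE t in lebesgue. t\<^sub>0 < t \<longrightarrow> regular t"
    by (rule AE_completion)
  then obtain N where "negligible N" "{t. \<not> (t\<^sub>0 < t \<longrightarrow> regular t)} \<subseteq> N"
    unfolding eventually_ae_filter_negligible by blast
  then show ?thesis
    by (auto intro: negligible_subset)
qed

lemma regular_gt: "regular t \<Longrightarrow> t\<^sub>0 < t"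
  by (simp add: regular_def)

lemma regular_x'_has_vector_derivative: "regular t \<Longrightarrow> (x' has_vector_derivative x'' t) (at t)"
  by (simp add: regular_def)

lemma generators_finite: "finite {g i y | i. i < m}"
  using finite_image_set[of "\<lambda>i. i < m" "\<lambda>i. g i y"] by simp

lemma generators_nonempty: "{g i y | i. i < m} \<noteq> {}"
  using m_pos by blast

lemma gradient_in_C: "i < m \<Longrightarrow> g i y \<in> C y"
  unfolding C_def by (rule hull_inc) blast

lemma regular_x''_decomposition:
  assumes "regular t"
  obtains c where "c \<in> C (x t)" "x'' t = - (\<alpha> / t) *\<^sub>R x' t - c"
proof -
  have "\<alpha> / t > 0"
    using assms t0_pos \<alpha>_pos by (simp add: regular_def)
  then show thesis
    using proj_translated_hull_eqD(1)[OF generators_finite generators_nonempty] assms that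
    unfolding regular_def C_def by blast
qed

lemma regular_descent:
  assumes "regular t" "w \<in> C (x t)"
  shows "x' t \<bullet> (w + x'' t) \<le> - (\<alpha> / t) * (norm (x' t))\<^sup>2"
proof -
  have "\<alpha> / t > 0"
    using assms t0_pos \<alpha>_pos by (simp add: regular_def)
  then show ?thesis
    using proj_translated_hull_eqD(2)[OF generators_finite generators_nonempty] assms
    unfolding regular_def C_def by blast
qed

lemma x_has_vector_derivative_at: "t\<^sub>0 < t \<Longrightarrow> (x has_vector_derivative x' t) (at t)"
  using x_deriv[of t] at_within_interior[of t "{t\<^sub>0..}"] by simp

lemma continuous_on_x: "continuous_on {t\<^sub>0..} x"
proof (rule continuous_on_eq_continuous_within[THEN iffD2], intro ballI)
  fix t assume "t \<in> {t\<^sub>0..}"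
  then show "continuous (at t within {t\<^sub>0..}) x"
    using x_deriv[of t] has_vector_derivative_continuous by auto
qed

lemma norm_C_le:
  assumes "c \<in> C y"
  shows "norm c \<le> (\<Sum>i<m. norm (g i y))"
proof -
  have "{g i y | i. i < m} \<subseteq> cball 0 (\<Sum>i<m. norm (g i y))"
    by (auto intro!: member_le_sum)
  then have "C y \<subseteq> cball 0 (\<Sum>i<m. norm (g i y))"
    unfolding C_def by (intro hull_minimal convex_cball)
  then show ?thesis
    using assms by auto
qed

lemma x''_bounded:
  obtains L where "L \<ge> 0" "\<And>t. t \<le> T \<Longrightarrow> regular t \<Longrightarrow> norm (x'' t) \<le> L"
proof -
  have "compact (x' ` {t\<^sub>0..T})"
    by (intro compact_continuous_image continuous_on_subset[OF x'_cont]) auto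
  then obtain B1 where B1: "\<And>t. t \<in> {t\<^sub>0..T} \<Longrightarrow> norm (x' t) \<le> B1"
    by (meson compact_imp_bounded bounded_iff imageI)
  have "continuous_on {t\<^sub>0..T} (\<lambda>t. g i (x t))" if "i < m" for i
    by (rule continuous_on_compose2[OF g_cont[OF that] continuous_on_subset[OF continuous_on_x]]) auto
  then have "continuous_on {t\<^sub>0..T} (\<lambda>t. \<Sum>i<m. norm (g i (x t)))"
    by (intro continuous_on_sum continuous_on_norm) auto
  then have "compact ((\<lambda>t. \<Sum>i<m. norm (g i (x t))) ` {t\<^sub>0..T})"
    by (intro compact_continuous_image) auto
  then obtain B2 where B2: "\<And>t. t \<in> {t\<^sub>0..T} \<Longrightarrow> norm (\<Sum>i<m. norm (g i (x t))) \<le> B2"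
    by (meson compact_imp_bounded bounded_iff imageI)
  show thesis
  proof (rule that)
    show "0 \<le> \<alpha> / t\<^sub>0 * \<bar>B1\<bar> + \<bar>B2\<bar>"
      using \<alpha>_pos t0_pos by simp
    fix t assume "t \<le> T" "regular t"
    then have t: "t \<in> {t\<^sub>0..T}" "t\<^sub>0 < t"
      by (auto dest: regular_gt)
    obtain c where c: "c \<in> C (x t)" "x'' t = - (\<alpha> / t) *\<^sub>R x' t - c"
      using regular_x''_decomposition[OF \<open>regular t\<close>] .
    have "norm (x'' t) \<le> \<alpha> / t * norm (x' t) + norm c"
      unfolding c(2) using norm_triangle_ineq4[of "- (\<alpha> / t) *\<^sub>R x' t" c] \<alpha>_pos t t0_pos by simp
    also have "\<alpha> / t * norm (x' t) \<le> \<alpha> / t\<^sub>0 * \<bar>B1\<bar>"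
      using B1[OF t(1)] \<alpha>_pos t0_pos t by (intro mult_mono frac_le) auto
    also have "norm c \<le> \<bar>B2\<bar>"
      using norm_C_le[OF c(1)] B2[OF t(1)] by simp
    finally show "norm (x'' t) \<le> \<alpha> / t\<^sub>0 * \<bar>B1\<bar> + \<bar>B2\<bar>"
      by simp
  qed
qed

lemma lipschitz_on_x':
  obtains L where "L-lipschitz_on {t\<^sub>0..T} x'"
proof -
  obtain L where "L \<ge> 0" and L: "\<And>t. t \<le> T \<Longrightarrow> regular t \<Longrightarrow> norm (x'' t) \<le> L"
    using x''_bounded by blast
  have "L-lipschitz_on {t\<^sub>0..T} x'"
  proof (cases "t\<^sub>0 \<le> T")
    case True
    show ?thesis
    proof (rule lipschitz_on_primitive[OF _ _ _ \<open>L \<ge> 0\<close>])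
      show "negligible (insert t\<^sub>0 {t. t\<^sub>0 < t \<and> \<not> regular t})"
        using negligible_irregular by simp
      show "(x'' has_integral x' t - x' t\<^sub>0) {t\<^sub>0..t}" if "t \<in> {t\<^sub>0..T}" for t
        using x'_eq[of t] integrable_integral[OF x''_int[of t]] that by simp
    qed (use L in auto)
  qed (use \<open>L \<ge> 0\<close> in \<open>simp add: lipschitz_on_def\<close>)
  then show thesis ..
qed

lemma lipschitz_at_x': "t \<in> {t\<^sub>0..T} \<Longrightarrow> lipschitz_at {t\<^sub>0..T} x' t"
  using lipschitz_on_x' lipschitz_on_imp_lipschitz_at by blast

lemma lipschitz_at_x: "t \<in> {t\<^sub>0..T} \<Longrightarrow> lipschitz_at {t\<^sub>0..T} x t"
  by (rule vector_derivative_imp_lipschitz_at[OF has_vector_derivative_within_subset[OF x_deriv]]) auto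

definition W :: "nat \<Rightarrow> real \<Rightarrow> real" where
  "W i t = f i (x t) + (1/2) * (norm (x' t))\<^sup>2"

lemma W_has_derivative:
  assumes "regular t" "i < m"
  shows "(W i has_real_derivative x' t \<bullet> (g i (x t) + x'' t)) (at t)"
proof -
  have "((\<lambda>s. f i (x s)) has_real_derivative g i (x t) \<bullet> x' t) (at t)"
    using x_has_vector_derivative_at[OF regular_gt[OF assms(1)]] f_grad[OF assms(2)]
    by (rule has_vector_derivative_compose_gradient)
  moreover have "((\<lambda>s. x' s \<bullet> x' s) has_real_derivative x' t \<bullet> x'' t + x'' t \<bullet> x' t) (at t)"
    using regular_x'_has_vector_derivative[OF assms(1)] by (intro has_vector_derivative_inner)
  ultimately have "(W i has_real_derivative g i (x t) \<bullet> x' t + 1/2 * (x' t \<bullet> x'' t + x'' t \<bullet> x' t)) (at t)"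
    unfolding W_def[abs_def] power2_norm_eq_inner by (intro DERIV_add DERIV_cmult)
  then show ?thesis
    by (simp add: inner_add_right inner_commute)
qed

lemma lipschitz_at_W:
  assumes "i < m" "t \<in> {t\<^sub>0..T}"
  shows "lipschitz_at {t\<^sub>0..T} (W i) t"
proof -
  have "((\<lambda>s. f i (x s)) has_real_derivative g i (x t) \<bullet> x' t) (at t within {t\<^sub>0..T})"
    using has_vector_derivative_within_subset[OF x_deriv, of t "{t\<^sub>0..T}"] f_grad[OF assms(1)] assms(2)
    by (intro has_vector_derivative_compose_gradient) auto
  then show ?thesis
    unfolding W_def[abs_def] power2_norm_eq_inner using assms(2)
    by (intro lipschitz_at_add lipschitz_at_mult lipschitz_at_const lipschitz_at_inner lipschitz_at_x'
        DERIV_imp_lipschitz_at)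
qed

lemma W_decreasing:
  assumes "i < m" "t\<^sub>0 \<le> s" "s \<le> t"
  shows "W i t \<le> W i s"
proof (rule lipschitz_at_DERIV_nonpos_ae_imp_decreasing[OF assms(3) _ negligible_irregular])
  fix r assume "r \<in> {s..t}"
  then show "lipschitz_at {s..t} (W i) r"
    using lipschitz_at_W[OF assms(1), of r t] assms by (auto intro: lipschitz_at_subset)
next
  fix r assume "s < r" "r < t" "r \<notin> {r. t\<^sub>0 < r \<and> \<not> regular r}"
  then have "regular r"
    using assms by auto
  have "x' r \<bullet> (g i (x r) + x'' r) \<le> - (\<alpha> / r) * (norm (x' r))\<^sup>2"
    by (rule regular_descent[OF \<open>regular r\<close> gradient_in_C[OF assms(1)]])
  also have "\<dots> \<le> 0"
    using \<alpha>_pos regular_gt[OF \<open>regular r\<close>] t0_pos by simp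
  finally show "\<exists>D\<le>0. (W i has_real_derivative D) (at r)"
    using W_has_derivative[OF \<open>regular r\<close> assms(1)] by blast
qed

definition h :: "'a \<Rightarrow> real \<Rightarrow> real" where
  "h z t = (1/2) * (norm (x t - z))\<^sup>2"

lemma h_nonneg: "0 \<le> h z t"
  by (simp add: h_def)

lemma h_has_derivative:
  assumes "(x has_vector_derivative x' t) (at t within S)"
  shows "(h z has_real_derivative (x t - z) \<bullet> x' t) (at t within S)"
proof -
  have "((\<lambda>s. x s - z) has_vector_derivative x' t) (at t within S)"
    using assms by (auto intro!: derivative_eq_intros)
  then have "(h z has_real_derivative 1/2 * ((x t - z) \<bullet> x' t + x' t \<bullet> (x t - z))) (at t within S)"
    unfolding h_def[abs_def] power2_norm_eq_inner by (intro DERIV_cmult has_vector_derivative_inner)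
  then show ?thesis
    by (simp add: inner_commute)
qed

lemma inner_C_lower_bound:
  assumes "\<And>i. i < m \<Longrightarrow> \<mu> \<le> f i y - f i z" "c \<in> C y"
  shows "\<mu> \<le> (y - z) \<bullet> c"
proof -
  have "{g i y | i. i < m} \<subseteq> {w. \<mu> \<le> (y - z) \<bullet> w}"
  proof clarify
    fix i assume "i < m"
    have "f i y + g i y \<bullet> (z - y) \<le> f i z"
      by (rule convex_on_imp_above_tangent_inner[OF f_convex f_grad]) (use \<open>i < m\<close> in auto)
    then show "\<mu> \<le> (y - z) \<bullet> g i y"
      using assms(1)[OF \<open>i < m\<close>] by (simp add: inner_diff_left inner_diff_right inner_commute)
  qed
  then have "C y \<subseteq> {w. \<mu> \<le> (y - z) \<bullet> w}"
    unfolding C_def by (intro hull_minimal convex_halfspace_ge)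
  then show ?thesis
    using assms(2) by blast
qed

text \<open>The parameter \<open>\<mu>\<close> stands for a lower bound of \<open>W\<^sub>i - f\<^sub>i(z)\<close> on the time
  interval under consideration; any energy \<open>W\<^sub>i\<close> would do in place of \<open>W\<^sub>0\<close>.\<close>

definition lyapunov :: "'a \<Rightarrow> real \<Rightarrow> real \<Rightarrow> real" where
  "lyapunov z \<mu> t = ((x t - z) \<bullet> x' t) / t + (\<alpha> + 1) * (h z t / t\<^sup>2) + \<mu> * ln t + 3 / (2 * \<alpha>) * W 0 t"

definition lyapunov' :: "'a \<Rightarrow> real \<Rightarrow> real \<Rightarrow> real" where
  "lyapunov' z \<mu> t = ((norm (x' t))\<^sup>2 + (x t - z) \<bullet> x'' t) / t + \<alpha> * ((x t - z) \<bullet> x' t) / t\<^sup>2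
     - 2 * (\<alpha> + 1) * h z t / t ^ 3 + \<mu> / t + 3 / (2 * \<alpha>) * (x' t \<bullet> (g 0 (x t) + x'' t))"

lemma lyapunov_has_derivative:
  assumes "regular t"
  shows "(lyapunov z \<mu> has_real_derivative lyapunov' z \<mu> t) (at t)"
proof -
  have "t > 0"
    using regular_gt[OF assms] t0_pos by simp
  have x: "(x has_vector_derivative x' t) (at t)"
    using x_has_vector_derivative_at[OF regular_gt[OF assms]] .
  then have "((\<lambda>s. x s - z) has_vector_derivative x' t) (at t)"
    by (auto intro!: derivative_eq_intros)
  then have u: "((\<lambda>s. (x s - z) \<bullet> x' s) has_real_derivative (x t - z) \<bullet> x'' t + x' t \<bullet> x' t) (at t)"
    using regular_x'_has_vector_derivative[OF assms] by (intro has_vector_derivative_inner)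
  have "(lyapunov z \<mu> has_real_derivative
      (((x t - z) \<bullet> x'' t + x' t \<bullet> x' t) * t - ((x t - z) \<bullet> x' t) * 1) / (t * t)
      + (\<alpha> + 1) * (((x t - z) \<bullet> x' t * t\<^sup>2 - h z t * (real 2 * t ^ (2 - Suc 0))) / (t\<^sup>2 * t\<^sup>2))
      + \<mu> * inverse t + 3 / (2 * \<alpha>) * (x' t \<bullet> (g 0 (x t) + x'' t))) (at t)"
    unfolding lyapunov_def[abs_def] using \<open>t > 0\<close>
    by (intro DERIV_add DERIV_cmult DERIV_divide u h_has_derivative x DERIV_ident DERIV_pow DERIV_ln
        W_has_derivative assms m_pos) auto
  then show ?thesis
    by (rule DERIV_cong) (use \<open>t > 0\<close> in \<open>simp add: lyapunov'_def dot_square_norm field_simps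
        power2_eq_square power3_eq_cube\<close>)
qed

lemma lyapunov'_nonpos:
  assumes "regular t" "\<And>i. i < m \<Longrightarrow> \<mu> \<le> W i t - f i z"
  shows "lyapunov' z \<mu> t \<le> 0"
proof -
  have "t > 0"
    using regular_gt[OF assms(1)] t0_pos by simp
  obtain c where c: "c \<in> C (x t)" "x'' t = - (\<alpha> / t) *\<^sub>R x' t - c"
    using regular_x''_decomposition[OF assms(1)] .
  have "\<mu> - (1/2) * (norm (x' t))\<^sup>2 \<le> (x t - z) \<bullet> c"
    using assms(2) by (intro inner_C_lower_bound[OF _ c(1)]) (fastforce simp: W_def)
  then have "(\<mu> - (1/2) * (norm (x' t))\<^sup>2) / t \<le> ((x t - z) \<bullet> c) / t"
    using \<open>t > 0\<close> by (rule divide_right_mono[OF _ less_imp_le])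
  moreover have "((norm (x' t))\<^sup>2 + (x t - z) \<bullet> x'' t) / t
      = (norm (x' t))\<^sup>2 / t - \<alpha> * ((x t - z) \<bullet> x' t) / t\<^sup>2 - ((x t - z) \<bullet> c) / t"
    using \<open>t > 0\<close> by (simp add: c(2) inner_diff_right field_simps power2_eq_square)
  moreover have "3 / (2 * \<alpha>) * (x' t \<bullet> (g 0 (x t) + x'' t)) \<le> 3 / (2 * \<alpha>) * (- (\<alpha> / t) * (norm (x' t))\<^sup>2)"
    using regular_descent[OF assms(1) gradient_in_C[OF m_pos]] \<alpha>_pos by (intro mult_left_mono) auto
  moreover have "3 / (2 * \<alpha>) * (- (\<alpha> / t) * (norm (x' t))\<^sup>2) = - (3/2) * ((norm (x' t))\<^sup>2 / t)"
    using \<alpha>_pos by (simp add: field_simps)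
  moreover have "(\<mu> - (1/2) * (norm (x' t))\<^sup>2) / t = \<mu> / t - (1/2) * ((norm (x' t))\<^sup>2 / t)"
    by (simp add: diff_divide_distrib)
  moreover have "0 \<le> 2 * (\<alpha> + 1) * h z t / t ^ 3"
    using \<alpha>_pos \<open>t > 0\<close> h_nonneg by simp
  ultimately show ?thesis
    unfolding lyapunov'_def by linarith
qed

lemma lipschitz_at_lyapunov:
  assumes "t \<in> {t\<^sub>0..T}"
  shows "lipschitz_at {t\<^sub>0..T} (lyapunov z \<mu>) t"
proof -
  have "t > 0"
    using assms t0_pos by simp
  have x: "(x has_vector_derivative x' t) (at t within {t\<^sub>0..T})"
    using has_vector_derivative_within_subset[OF x_deriv, of t "{t\<^sub>0..T}"] assms by auto
  have "lipschitz_at {t\<^sub>0..T} (\<lambda>s. (x s - z) \<bullet> x' s * inverse s) t"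
    using \<open>t > 0\<close>
    by (intro lipschitz_at_mult lipschitz_at_inner lipschitz_at_diff lipschitz_at_x[OF assms]
        lipschitz_at_x'[OF assms] lipschitz_at_const DERIV_imp_lipschitz_at[OF DERIV_inverse]) simp
  then have u: "lipschitz_at {t\<^sub>0..T} (\<lambda>s. ((x s - z) \<bullet> x' s) / s) t"
    by (simp add: divide_inverse)
  have "((\<lambda>s. h z s / s\<^sup>2) has_real_derivative
      ((x t - z) \<bullet> x' t * t\<^sup>2 - h z t * (real 2 * t ^ (2 - Suc 0))) / (t\<^sup>2 * t\<^sup>2)) (at t within {t\<^sub>0..T})"
    using \<open>t > 0\<close> by (intro DERIV_divide h_has_derivative[OF x] DERIV_pow) simp
  then have h: "lipschitz_at {t\<^sub>0..T} (\<lambda>s. h z s / s\<^sup>2) t"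
    by (rule DERIV_imp_lipschitz_at)
  have ln: "lipschitz_at {t\<^sub>0..T} ln t"
    by (rule DERIV_imp_lipschitz_at[OF has_field_derivative_at_within[OF DERIV_ln[OF \<open>t > 0\<close>]]])
  show ?thesis
    unfolding lyapunov_def[abs_def]
    by (intro lipschitz_at_add lipschitz_at_mult lipschitz_at_const u h ln lipschitz_at_W[OF m_pos assms])
qed

lemma lyapunov_decreasing:
  assumes "t\<^sub>0 \<le> s" "\<And>t i. t \<in> {t\<^sub>0..s} \<Longrightarrow> i < m \<Longrightarrow> \<mu> \<le> W i t - f i z"
  shows "lyapunov z \<mu> s \<le> lyapunov z \<mu> t\<^sub>0"
proof (rule lipschitz_at_DERIV_nonpos_ae_imp_decreasing[OF assms(1) lipschitz_at_lyapunov negligible_irregular])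
  fix t assume "t\<^sub>0 < t" "t < s" "t \<notin> {t. t\<^sub>0 < t \<and> \<not> regular t}"
  then have "regular t"
    by simp
  have "lyapunov' z \<mu> t \<le> 0"
    by (rule lyapunov'_nonpos[OF \<open>regular t\<close> assms(2)]) (use \<open>t\<^sub>0 < t\<close> \<open>t < s\<close> in auto)
  then show "\<exists>D\<le>0. (lyapunov z \<mu> has_real_derivative D) (at t)"
    using lyapunov_has_derivative[OF \<open>regular t\<close>] by blast
qed

lemma velocity_bound:
  assumes "x' t\<^sub>0 = 0" "t\<^sub>0 \<le> s"
    and \<mu>: "\<And>t i. t \<in> {t\<^sub>0..s} \<Longrightarrow> i < m \<Longrightarrow> \<mu> \<le> W i t - f i z"
    and M: "\<And>i. i < m \<Longrightarrow> f i (x t\<^sub>0) - f i z \<le> M"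
  shows "((x s - z) \<bullet> x' s) / s
    \<le> (\<alpha> + 1) * (1 / t\<^sub>0\<^sup>2) * h z t\<^sub>0 + 3 / (2 * \<alpha>) * M - \<mu> * (ln s - ln t\<^sub>0 + 3 / (2 * \<alpha>))"
proof -
  define c where "c = 3 / (2 * \<alpha>)"
  have "c > 0"
    using \<alpha>_pos by (simp add: c_def)
  have "lyapunov z \<mu> s \<le> lyapunov z \<mu> t\<^sub>0"
    by (rule lyapunov_decreasing[OF assms(2) \<mu>])
  then have "((x s - z) \<bullet> x' s) / s + (\<alpha> + 1) * (h z s / s\<^sup>2) + \<mu> * ln s + c * W 0 s
      \<le> (\<alpha> + 1) * (h z t\<^sub>0 / t\<^sub>0\<^sup>2) + \<mu> * ln t\<^sub>0 + c * W 0 t\<^sub>0"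
    by (simp add: lyapunov_def c_def assms(1))
  moreover have "0 \<le> (\<alpha> + 1) * (h z s / s\<^sup>2)"
    using \<alpha>_pos h_nonneg by simp
  moreover have "c * \<mu> + c * f 0 z \<le> c * W 0 s"
    using \<mu>[of s 0] m_pos assms(2) \<open>c > 0\<close> by (simp add: distrib_left[symmetric])
  moreover have "c * W 0 t\<^sub>0 \<le> c * M + c * f 0 z"
    using M[OF m_pos] assms(1) \<open>c > 0\<close> by (simp add: distrib_left[symmetric] W_def)
  moreover have "(\<alpha> + 1) * (1 / t\<^sub>0\<^sup>2) * h z t\<^sub>0 = (\<alpha> + 1) * (h z t\<^sub>0 / t\<^sub>0\<^sup>2)"
    by simp
  moreover have "\<mu> * (ln s - ln t\<^sub>0 + c) = \<mu> * ln s - \<mu> * ln t\<^sub>0 + c * \<mu>"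
    by (simp add: algebra_simps)
  ultimately show ?thesis
    unfolding c_def[symmetric] by linarith
qed

lemma continuous_on_h: "continuous_on {t\<^sub>0..} (h z)"
  unfolding h_def[abs_def] by (intro continuous_intros continuous_on_x)

lemma integrated_velocity_bound:
  assumes "x' t\<^sub>0 = 0" "t\<^sub>0 \<le> \<tau>"
    and \<mu>: "\<And>t i. t \<in> {t\<^sub>0..\<tau>} \<Longrightarrow> i < m \<Longrightarrow> \<mu> \<le> W i t - f i z"
    and M: "\<And>i. i < m \<Longrightarrow> f i (x t\<^sub>0) - f i z \<le> M"
  shows "\<mu> * (\<tau> * ln \<tau> + (- 1 - ln t\<^sub>0 + 3 / (2 * \<alpha>)) * \<tau> + (t\<^sub>0 - 3 / (2 * \<alpha>) * t\<^sub>0))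
     \<le> ((\<alpha> + 1) * (1 / t\<^sub>0 ^ 2) * h z t\<^sub>0 + 3 / (2 * \<alpha>) * M) * (\<tau> - t\<^sub>0) + h z t\<^sub>0 / t\<^sub>0"
proof -
  define c where "c = 3 / (2 * \<alpha>)"
  define K where "K = (\<alpha> + 1) * (1 / t\<^sub>0 ^ 2) * h z t\<^sub>0 + c * M"
  define \<Gamma> where "\<Gamma> s = h z s / s - K * s + \<mu> * (s * ln s - s - ln t\<^sub>0 * s + c * s)" for s
  have "\<Gamma> \<tau> \<le> \<Gamma> t\<^sub>0"
  proof (rule DERIV_nonpos_imp_decreasing_open[OF assms(2)])
    fix r assume r: "t\<^sub>0 < r" "r < \<tau>"
    then have "r > 0"
      using t0_pos by simp
    have "(\<Gamma> has_real_derivative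
        ((x r - z) \<bullet> x' r * r - h z r * 1) / (r * r) - K * 1
        + \<mu> * (1 * ln r + inverse r * r - 1 - ln t\<^sub>0 * 1 + c * 1)) (at r)"
      unfolding \<Gamma>_def[abs_def] using \<open>r > 0\<close>
      by (intro DERIV_add DERIV_diff DERIV_cmult DERIV_mult DERIV_divide DERIV_ident DERIV_ln DERIV_const
          h_has_derivative x_has_vector_derivative_at r(1)) auto
    moreover have "((x r - z) \<bullet> x' r * r - h z r * 1) / (r * r) - K * 1
        + \<mu> * (1 * ln r + inverse r * r - 1 - ln t\<^sub>0 * 1 + c * 1)
        = ((x r - z) \<bullet> x' r) / r - h z r / r\<^sup>2 - (K - \<mu> * (ln r - ln t\<^sub>0 + c))"
      using \<open>r > 0\<close> by (simp add: field_simps power2_eq_square)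
    moreover have "((x r - z) \<bullet> x' r) / r \<le> K - \<mu> * (ln r - ln t\<^sub>0 + c)"
      unfolding K_def c_def using r \<mu> by (intro velocity_bound[OF assms(1) _ _ M]) auto
    moreover have "0 \<le> h z r / r\<^sup>2"
      using h_nonneg by simp
    ultimately show "\<exists>D. (\<Gamma> has_real_derivative D) (at r) \<and> D \<le> 0"
      by (intro exI conjI) (assumption, linarith)
  next
    show "continuous_on {t\<^sub>0..\<tau>} \<Gamma>"
      unfolding \<Gamma>_def[abs_def] using t0_pos
      by (intro continuous_intros continuous_on_subset[OF continuous_on_h]) auto
  qed
  moreover have "0 \<le> h z \<tau> / \<tau>"
    using h_nonneg assms(2) t0_pos by simp
  moreover have "\<mu> * (\<tau> * ln \<tau> + (- 1 - ln t\<^sub>0 + c) * \<tau> + (t\<^sub>0 - c * t\<^sub>0))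
      = \<mu> * (\<tau> * ln \<tau> - \<tau> - ln t\<^sub>0 * \<tau> + c * \<tau>) - \<mu> * (t\<^sub>0 * ln t\<^sub>0 - t\<^sub>0 - ln t\<^sub>0 * t\<^sub>0 + c * t\<^sub>0)"
    by (simp add: algebra_simps)
  moreover have "K * (\<tau> - t\<^sub>0) = K * \<tau> - K * t\<^sub>0"
    by (simp add: algebra_simps)
  ultimately show ?thesis
    unfolding \<Gamma>_def K_def c_def by linarith
qed

theorem energy_gap_bound:
  assumes "x' t\<^sub>0 = 0" "t\<^sub>0 < \<tau>"
  shows "(MIN i\<in>{..<m}. W i \<tau> - f i z)
       * (\<tau> * ln \<tau> + (- 1 - ln t\<^sub>0 + 3 / (2 * \<alpha>)) * \<tau> + (t\<^sub>0 - 3 / (2 * \<alpha>) * t\<^sub>0))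
     \<le> ((\<alpha> + 1) * (1 / t\<^sub>0 ^ 2) * h z t\<^sub>0 + 3 / (2 * \<alpha>) * (MAX i\<in>{..<m}. f i (x t\<^sub>0) - f i z))
         * (\<tau> - t\<^sub>0) + h z t\<^sub>0 / t\<^sub>0"
proof (rule integrated_velocity_bound[OF assms(1) less_imp_le[OF assms(2)]])
  fix t i assume "t \<in> {t\<^sub>0..\<tau>}" "i < m"
  then have "(MIN i\<in>{..<m}. W i \<tau> - f i z) \<le> W i \<tau> - f i z"
    by (intro Min_le) auto
  also have "W i \<tau> \<le> W i t"
    using W_decreasing[OF \<open>i < m\<close>] \<open>t \<in> {t\<^sub>0..\<tau>}\<close> by simp
  finally show "(MIN i\<in>{..<m}. W i \<tau> - f i z) \<le> W i t - f i z"
    by simp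
next
  fix i assume "i < m"
  then show "f i (x t\<^sub>0) - f i z \<le> (MAX i\<in>{..<m}. f i (x t\<^sub>0) - f i z)"
    by (intro Max_ge) auto
qed

end

theorem lemma4p6:
  fixes m :: nat
    and f :: "nat \<Rightarrow> 'a::{real_inner,complete_space} \<Rightarrow> real"
    and g :: "nat \<Rightarrow> 'a \<Rightarrow> 'a"
    and \<alpha> t\<^sub>0 :: real
    and x\<^sub>0 :: 'a
    and x x' x'' :: "real \<Rightarrow> 'a"
  assumes m_pos: "m > 0"
    and f_convex: "\<And>i. i < m \<Longrightarrow> convex_on UNIV (f i)"
    and f_grad: "\<And>i y. i < m \<Longrightarrow> (f i has_derivative (\<lambda>h. g i y \<bullet> h)) (at y)"
    and g_cont: "\<And>i. i < m \<Longrightarrow> continuous_on UNIV (g i)"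
    and \<alpha>_pos: "\<alpha> > 0"
    and t0_pos: "t\<^sub>0 > 0"
    and x_deriv: "\<And>t. t \<ge> t\<^sub>0 \<Longrightarrow> (x has_vector_derivative x' t) (at t within {t\<^sub>0..})"
    and x'_cont: "continuous_on {t\<^sub>0..} x'"
    and x'_ac: "\<And>T. T \<ge> t\<^sub>0 \<Longrightarrow> abs_continuous_on t\<^sub>0 T x'"
    and x''_int: "\<And>t. t \<ge> t\<^sub>0 \<Longrightarrow> x'' integrable_on {t\<^sub>0..t}"
    and x'_eq: "\<And>t. t \<ge> t\<^sub>0 \<Longrightarrow> x' t = x' t\<^sub>0 + integral {t\<^sub>0..t} x''"
    and x''_deriv: "AE t in lborel. t \<ge> t\<^sub>0 \<longrightarrow> (x' has_vector_derivative x'' t) (at t)"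
    and equation: "AE t in lborel. t > t\<^sub>0 \<longrightarrow>
        (\<alpha> / t) *\<^sub>R x' t
        + proj ((\<lambda>c. c + x'' t) ` (convex hull {g i (x t) | i. i < m})) 0 = 0"
    and init_x: "x t\<^sub>0 = x\<^sub>0"
    and init_x': "x' t\<^sub>0 = 0"
  shows "\<exists>A B :: real. \<forall>z :: 'a. \<forall>\<tau> > t\<^sub>0.
     (MIN i\<in>{..<m}. f i (x \<tau>) + (1/2) * (norm (x' \<tau>)) ^ 2 - f i z)
       * (\<tau> * ln \<tau> + A * \<tau> + B)
     \<le> ((\<alpha> + 1) * (1 / t\<^sub>0 ^ 2) * ((1/2) * (norm (x t\<^sub>0 - z)) ^ 2)
          + (3 / (2 * \<alpha>)) * (MAX i\<in>{..<m}. f i x\<^sub>0 - f i z)) * (\<tau> - t\<^sub>0)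
       + ((1/2) * (norm (x t\<^sub>0 - z)) ^ 2) / t\<^sub>0"
proof -
  interpret inertial_multiobjective_system m f g \<alpha> t\<^sub>0 x x' x''
    using m_pos f_convex f_grad g_cont \<alpha>_pos t0_pos x_deriv x'_cont x''_int x'_eq x''_deriv equation
    by unfold_locales
  show ?thesis
    unfolding init_x[symmetric] using energy_gap_bound[OF init_x'] unfolding W_def h_def by blast
qed

end
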